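(* We have $\sup_A\overline{\mathrm{d}}(A)=1$, where the supremum is over all L-primitive sets $A\subset\mathbb{Z}_{>1}$ and $\overline{\mathrm{d}}(A)=\limsup_{x\to\infty}|A\cap[1,x]|/x$ is the upper natural density.
   Context: For an integer $a>1$ let $P(a)$ be its largest prime factor and $\mathrm{L}_a=\{ba: b\in\mathbb{N},\ \text{every prime } p\mid b \text{ satisfies } p\ge P(a)\}$. A set $A\subset\mathbb{Z}_{>1}$ is L-primitive if $a'\notin\mathrm{L}_a$ for all distinct $a,a'\in A$. *)

theory Defs
  imports "HOL-Analysis.Analysis" "HOL-Computational_Algebra.Primes"
begin

definition gpf :: "nat \<Rightarrow> nat" where
  "gpf a = Max (prime_factors a)"

definition Lset :: "nat \<Rightarrow> nat set" where
  "Lset a = {b * a | b. b \<ge> 1 \<and> (\<forall>p. prime p \<longrightarrow> p dvd b \<longrightarrow> p \<ge> gpf a)}"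

definition L_primitive :: "nat set \<Rightarrow> bool" where
  "L_primitive A \<longleftrightarrow> A \<subseteq> {2..} \<and> (\<forall>a\<in>A. \<forall>a'\<in>A. a \<noteq> a' \<longrightarrow> a' \<notin> Lset a)"

definition upper_density :: "nat set \<Rightarrow> ereal" where
  "upper_density A = limsup (\<lambda>n. ereal (real (card (A \<inter> {1..n})) / real n))"

end

theory Submission
  imports Defs "HOL-Number_Theory.Totient" "HOL-Real_Asymp.Real_Asymp"
begin

(* Fix K and choose N_i >= K with K^2 2^(i+1) phi(N_i!) <= N_i!, which is possible because
   H_N phi(N!) <= N!.  Then choose x_0 < x_1 < ... with x_(j+1) >= K 2^(j+1) x_j N_j! and so large
   that fewer than x_j/K integers up to x_j are N_j-smooth.  Let B_j be the integers in (x_j/K, x_j]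
   that are not N_j-smooth, and let A consist of those n in the union S of the B_j that lie in no
   L_m with n <> m in S; such an A is L-primitive.  If n in B_j lies in L_m with m in B_i, the
   cofactor n/m has only prime factors >= P(m) > N_i >= K, so it exceeds K, forcing i < j, and it
   is coprime to N_i!.  Counting integers up to x_j/m coprime to N_i! bounds the number of such n
   by 2^(-i) x_j/K for each i < j, so A omits at most 3 x_j/K of the integers in (x_j/K, x_j] and
   its upper density is at least 1 - 4/K. *)

lemma card_coprime_atLeastAtMost_mult:
  fixes Q :: nat
  assumes "0 < Q"
  shows "card {u \<in> {1..c * Q}. coprime u Q} = c * totient Q"
proof (induction c)
  case 0
  then show ?case by simp
next
  case (Suc c)
  let ?shift = "(\<lambda>u. u + c * Q) ` totatives Q"
  have coprime_shift: "coprime (u + c * Q) Q \<longleftrightarrow> coprime u Q" for u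
    by (metis coprime_iff_gcd_eq_1 gcd.commute gcd_add_mult add.commute)
  have split: "{u \<in> {1..Suc c * Q}. coprime u Q} = {u \<in> {1..c * Q}. coprime u Q} \<union> ?shift"
  proof (intro set_eqI iffI)
    fix u assume u: "u \<in> {u \<in> {1..Suc c * Q}. coprime u Q}"
    show "u \<in> {u \<in> {1..c * Q}. coprime u Q} \<union> ?shift"
    proof (cases "u \<le> c * Q")
      case False
      then have "u - c * Q \<in> totatives Q" "u = (u - c * Q) + c * Q"
        using u coprime_shift[of "u - c * Q"] by (auto simp: in_totatives_iff)
      then show ?thesis by blast
    qed (use u in auto)
  qed (auto simp: in_totatives_iff coprime_shift)
  have "{u \<in> {1..c * Q}. coprime u Q} \<inter> ?shift = {}"
    by (auto simp: in_totatives_iff)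
  moreover have "card ?shift = totient Q"
    by (simp add: card_image totient_def)
  ultimately show ?case
    using Suc unfolding split by (simp add: card_Un_disjoint)
qed

lemma card_coprime_atLeastAtMost_le:
  fixes Q :: nat
  assumes "0 < Q"
  shows "real (card {u \<in> {1..y}. coprime u Q}) \<le> (real y / Q + 1) * totient Q"
proof -
  have "y \<le> (y div Q + 1) * Q"
    using assms by (metis div_mult_mod_eq add_le_cancel_left distrib_right mod_less_divisor
        mult_1 less_imp_le)
  then have "card {u \<in> {1..y}. coprime u Q} \<le> card {u \<in> {1..(y div Q + 1) * Q}. coprime u Q}"
    by (intro card_mono) auto
  also have "\<dots> = (y div Q + 1) * totient Q"
    using assms by (rule card_coprime_atLeastAtMost_mult)
  finally have "real (card {u \<in> {1..y}. coprime u Q}) \<le> real (y div Q + 1) * totient Q"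
    by (metis of_nat_le_iff of_nat_mult)
  also have "\<dots> \<le> (real y / Q + 1) * totient Q"
    by (intro mult_right_mono) (auto simp: of_nat_div_le_of_nat)
  finally show ?thesis .
qed

lemma coprime_cofactors_eq:
  fixes s s' u u' F :: nat
  assumes "s dvd F" "s' dvd F" "coprime u F" "coprime u' F" "s * u = s' * u'"
  shows "s = s'"
proof (rule dvd_antisym)
  have "coprime s u'" "coprime s' u"
    using assms coprime_divisors[OF _ dvd_refl] by (metis coprime_commute)+
  moreover have "s dvd s' * u'" "s' dvd s * u"
    using assms(5) by (metis dvd_triv_left)+
  ultimately show "s dvd s'" "s' dvd s"
    by (simp_all add: coprime_dvd_mult_left_iff)
qed

(* The sets s * {u <= (F/s) F. coprime u F} for s in D are pairwise disjoint subsets of {1..F^2}. *)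
lemma sum_div_mult_totient_le:
  fixes F :: nat
  assumes "0 < F" "finite D" and dvd_F: "\<And>s. s \<in> D \<Longrightarrow> s dvd F"
  shows "(\<Sum>s\<in>D. (F div s) * totient F) \<le> F * F"
proof -
  define U where "U s = (\<lambda>u. s * u) ` {u \<in> {1..(F div s) * F}. coprime u F}" for s
  have card_U: "card (U s) = (F div s) * totient F" if "s \<in> D" for s
  proof -
    have "s \<noteq> 0"
      using dvd_F[OF that] \<open>0 < F\<close> by auto
    then have "inj_on (\<lambda>u. s * u) {u \<in> {1..(F div s) * F}. coprime u F}"
      by (auto simp: inj_on_def)
    then show ?thesis
      unfolding U_def using card_coprime_atLeastAtMost_mult[OF \<open>0 < F\<close>] by (simp add: card_image)
  qed
  have "U s \<subseteq> {1..F * F}" if "s \<in> D" for s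
  proof
    fix y assume "y \<in> U s"
    then obtain u where u: "1 \<le> u" "u \<le> (F div s) * F" and y: "y = s * u"
      unfolding U_def by auto
    have "s * u \<le> s * ((F div s) * F)"
      using u by simp
    also have "\<dots> = F * F"
      using dvd_F[OF that] by simp
    finally show "y \<in> {1..F * F}"
      using u y dvd_F[OF that] \<open>0 < F\<close> by (auto intro: Suc_leI)
  qed
  then have "card (\<Union>s\<in>D. U s) \<le> card {1..F * F}"
    by (meson UN_least card_mono finite_atLeastAtMost)
  moreover have "card (\<Union>s\<in>D. U s) = (\<Sum>s\<in>D. card (U s))"
  proof (rule card_UN_disjoint)
    show "\<forall>s\<in>D. \<forall>s'\<in>D. s \<noteq> s' \<longrightarrow> U s \<inter> U s' = {}"
      unfolding U_def using coprime_cofactors_eq[OF dvd_F dvd_F] by blast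
  qed (auto simp: U_def \<open>finite D\<close>)
  ultimately show ?thesis
    using card_U by simp
qed

lemma harm_mult_totient_fact_le:
  "harm N * real (totient (fact N :: nat)) \<le> fact N"
proof -
  define F where "F = (fact N :: nat)"
  have dvd_F: "s dvd F" if "s \<in> {1..N}" for s
    using that unfolding F_def by (auto intro: dvd_fact)
  have "real (\<Sum>s\<in>{1..N}. (F div s) * totient F) \<le> real (F * F)"
    by (rule of_nat_mono, rule sum_div_mult_totient_le[OF _ _ dvd_F]) (simp_all add: F_def)
  moreover have "real (\<Sum>s\<in>{1..N}. (F div s) * totient F) = real F * (harm N * totient F)"
    unfolding harm_def of_nat_sum sum_distrib_left sum_distrib_right
    by (intro sum.cong refl) (auto simp: real_of_nat_div dvd_F field_simps)
  ultimately show ?thesis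
    unfolding F_def by simp
qed

definition smooth :: "nat \<Rightarrow> nat \<Rightarrow> bool" where
  "smooth N n \<longleftrightarrow> (\<forall>p. prime p \<longrightarrow> p dvd n \<longrightarrow> p \<le> N)"

lemma inj_on_multiplicities_smooth:
  "inj_on (\<lambda>n. restrict (\<lambda>p. multiplicity p n) {p. prime p \<and> p \<le> N}) {n. n \<noteq> 0 \<and> smooth N n}"
proof (rule inj_onI)
  fix n n' assume n: "n \<in> {n. n \<noteq> 0 \<and> smooth N n}" and n': "n' \<in> {n. n \<noteq> 0 \<and> smooth N n}"
    and eq: "restrict (\<lambda>p. multiplicity p n) {p. prime p \<and> p \<le> N} =
      restrict (\<lambda>p. multiplicity p n') {p. prime p \<and> p \<le> N}"
  have "multiplicity p n = multiplicity p n'" if "prime p" for p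
  proof (cases "p \<le> N")
    case True
    then show ?thesis
      using that fun_cong[OF eq, of p] by simp
  next
    case False
    then have "\<not> p dvd n" "\<not> p dvd n'"
      using n n' that unfolding smooth_def by auto
    then show ?thesis
      by (simp add: not_dvd_imp_multiplicity_0)
  qed
  with n n' have "normalize n = normalize n'"
    by (intro multiplicity_eq_imp_eq) auto
  then show "n = n'"
    by simp
qed

lemma card_smooth_le: "card {n \<in> {1..2 ^ L}. smooth N n} \<le> (L + 1) ^ (N + 1)"
proof -
  define SM where "SM = {n \<in> {1..2 ^ L}. smooth N n}"
  define P where "P = {p. prime p \<and> p \<le> N}"
  have "finite P"
    unfolding P_def by simp
  have "card P \<le> card {0..N}"
    unfolding P_def by (intro card_mono) auto
  then have card_P: "card P \<le> N + 1"
    by simp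
  have multiplicity_le: "multiplicity p n \<le> L" if "prime p" "n \<in> SM" for p n
  proof -
    have n: "1 \<le> n" "n \<le> 2 ^ L"
      using that unfolding SM_def by auto
    have "(2::nat) ^ multiplicity p n \<le> p ^ multiplicity p n"
      using prime_ge_2_nat[OF that(1)] by (simp add: power_mono)
    also have "\<dots> \<le> n"
      using multiplicity_dvd[of p n] n by (auto intro: dvd_imp_le)
    finally have "(2::nat) ^ multiplicity p n \<le> 2 ^ L"
      using n by linarith
    then show ?thesis
      by simp
  qed
  have "restrict (\<lambda>p. multiplicity p n) P \<in> PiE P (\<lambda>_. {0..L})" if "n \<in> SM" for n
    using multiplicity_le[OF _ that] by (simp add: restrict_PiE_iff P_def)
  then have "(\<lambda>n. restrict (\<lambda>p. multiplicity p n) P) ` SM \<subseteq> PiE P (\<lambda>_. {0..L})"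
    by blast
  moreover have "inj_on (\<lambda>n. restrict (\<lambda>p. multiplicity p n) P) SM"
    using inj_on_multiplicities_smooth unfolding P_def SM_def by (rule inj_on_subset) auto
  ultimately have "card SM \<le> card (PiE P (\<lambda>_. {0..L}))"
    using \<open>finite P\<close> by (intro card_inj_on_le) (simp_all add: finite_PiE)
  also have "\<dots> = (L + 1) ^ card P"
    using \<open>finite P\<close> by (simp add: card_PiE)
  also have "\<dots> \<le> (L + 1) ^ (N + 1)"
    using card_P by (intro power_increasing) auto
  finally show ?thesis
    unfolding SM_def .
qed

lemma ex_card_smooth_le: "\<exists>X \<ge> c. K * card {n \<in> {1..X}. smooth N n} \<le> X"
proof -
  have "((\<lambda>L::nat. real K * real ((L + 1) ^ (N + 1)) / 2 ^ L) \<longlongrightarrow> 0) sequentially"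
    by real_asymp
  then have "eventually (\<lambda>L. real K * real ((L + 1) ^ (N + 1)) / 2 ^ L < 1) sequentially"
    by (rule order_tendstoD) simp
  then obtain L where L: "real K * real ((L + 1) ^ (N + 1)) / 2 ^ L < 1" and "c \<le> L"
    using eventually_happens'[OF _ eventually_conj[OF _ eventually_ge_at_top[of c]]] by auto
  have "K * card {n \<in> {1..2 ^ L}. smooth N n} \<le> K * (L + 1) ^ (N + 1)"
    by (intro mult_le_mono2 card_smooth_le)
  also have "\<dots> \<le> 2 ^ L"
  proof -
    have "real (K * (L + 1) ^ (N + 1)) < real (2 ^ L)"
      using L by (simp add: divide_less_eq)
    then show ?thesis
      by (metis of_nat_less_iff less_imp_le)
  qed
  finally have "K * card {n \<in> {1..2 ^ L}. smooth N n} \<le> 2 ^ L" .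
  moreover have "c \<le> 2 ^ L"
    using \<open>c \<le> L\<close> less_exp[of L] by linarith
  ultimately show ?thesis
    by (intro exI[of _ "2 ^ L"]) simp
qed

lemma prime_dvd_le_gpf:
  assumes "prime p" "p dvd n" "n \<noteq> 0"
  shows "p \<le> gpf n"
  unfolding gpf_def using assms by (intro Max_ge) (auto simp: in_prime_factors_iff)

lemma coprime_fact_if_prime_divisors_gt:
  assumes "\<And>p. prime p \<Longrightarrow> p dvd b \<Longrightarrow> N < p"
  shows "coprime b (fact N :: nat)"
proof (rule ccontr)
  assume "\<not> coprime b (fact N :: nat)"
  then have "gcd b (fact N) \<noteq> 1"
    by (simp add: coprime_iff_gcd_eq_1)
  then obtain p where "prime p" "p dvd gcd b (fact N)"
    using prime_factor_nat by blast
  then have "p \<le> N" "N < p"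
    using prime_dvd_fact_iff assms by auto
  then show False
    by simp
qed

lemma upper_density_le_1: "upper_density A \<le> 1"
  unfolding upper_density_def
proof (rule Limsup_bounded, rule always_eventually, rule allI)
  fix n :: nat
  have "card (A \<inter> {1..n}) \<le> card {1..n}"
    by (rule card_mono) auto
  then have "real (card (A \<inter> {1..n})) / real n \<le> 1"
    by (cases "n = 0") (auto simp: divide_le_eq)
  then show "ereal (real (card (A \<inter> {1..n})) / real n) \<le> 1"
    by simp
qed

lemma upper_density_ge_subseq:
  fixes x :: "nat \<Rightarrow> nat" and c :: real
  assumes "strict_mono x" "\<And>j. 0 < x j" "\<And>j. c * x j \<le> card (A \<inter> {1..x j})"
  shows "ereal c \<le> upper_density A"
proof -
  define f where "f n = ereal (real (card (A \<inter> {1..n})) / real n)" for n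
  have "ereal c \<le> limsup (f \<circ> x)"
  proof (rule le_Limsup)
    show "\<forall>\<^sub>F j in sequentially. ereal c \<le> (f \<circ> x) j"
      using assms(2,3) by (intro always_eventually) (simp add: f_def pos_le_divide_eq)
  qed simp
  also have "\<dots> \<le> limsup f"
    using assms(1) by (rule limsup_subseq_mono)
  finally show ?thesis
    unfolding upper_density_def f_def .
qed

locale L_primitive_construction =
  fixes K :: nat and N x :: "nat \<Rightarrow> nat"
  assumes K_pos: "0 < K"
    and K_le_N: "K \<le> N i"
    and totient_fact_N_le: "real K * K * 2 ^ (i + 1) * totient (fact (N i) :: nat) \<le> fact (N i)"
    and K_le_x: "K \<le> x j"
    and card_smooth_x_le: "K * card {n \<in> {1..x j}. smooth (N j) n} \<le> x j"
    and x_Suc_ge: "K * 2 ^ (i + 1) * x i * fact (N i) \<le> x (Suc i)"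
begin

lemma x_pos: "0 < x j"
  using K_pos K_le_x[of j] by linarith

lemma strict_mono_x: "strict_mono x"
  unfolding strict_mono_Suc_iff
proof
  fix j
  have "1 * 2 * 1 \<le> K * 2 ^ (j + 1) * fact (N j)"
    using K_pos by (intro mult_le_mono) auto
  then have "1 < K * 2 ^ (j + 1) * fact (N j)"
    by linarith
  then have "x j * 1 < x j * (K * 2 ^ (j + 1) * fact (N j))"
    using x_pos[of j] by simp
  also have "\<dots> \<le> x (Suc j)"
    using x_Suc_ge[of j] by (simp add: ac_simps)
  finally show "x j < x (Suc j)"
    by simp
qed

lemma x_growth:
  assumes "i < j"
  shows "K * 2 ^ (i + 1) * x i * fact (N i) \<le> x j"
  using x_Suc_ge[of i] strict_mono_leD[OF strict_mono_x, of "Suc i" j] assms by simp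

definition B :: "nat \<Rightarrow> nat set" where
  "B j = {n. x j < K * n \<and> n \<le> x j \<and> \<not> smooth (N j) n}"

definition S :: "nat set" where
  "S = (\<Union>j. B j)"

definition A :: "nat set" where
  "A = {n \<in> S. \<forall>m \<in> S. m \<noteq> n \<longrightarrow> n \<notin> Lset m}"

lemma finite_B: "finite (B j)"
  by (rule finite_subset[of _ "{..x j}"]) (auto simp: B_def)

lemma B_ge_2:
  assumes "n \<in> B j"
  shows "2 \<le> n"
proof -
  have "x j < K * n"
    using assms by (simp add: B_def)
  then have "K * 1 < K * n"
    using K_le_x[of j] by linarith
  then show ?thesis
    by simp
qed

lemma card_B_le: "card (B j) \<le> x j"
proof -
  have "B j \<subseteq> {1..x j}"
  proof
    fix m assume "m \<in> B j"
    with B_ge_2[OF this] show "m \<in> {1..x j}"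
      by (simp add: B_def)
  qed
  then show ?thesis
    using card_mono[of "{1..x j}" "B j"] by simp
qed

lemma L_primitive_A: "L_primitive A"
  unfolding L_primitive_def A_def S_def using B_ge_2 by blast

lemma gpf_B_gt:
  assumes "m \<in> B i"
  shows "N i < gpf m"
proof -
  obtain p where p: "prime p" "p dvd m" "N i < p"
    using assms by (auto simp: B_def smooth_def)
  have "p \<le> gpf m"
    using p(1,2) B_ge_2[OF assms] by (intro prime_dvd_le_gpf) auto
  with p(3) show ?thesis
    by linarith
qed

lemma B_Lset_cofactor:
  assumes m: "m \<in> B i" and n: "n \<in> B j" and "m \<noteq> n" "n \<in> Lset m"
  shows "i < j \<and> (\<exists>b \<in> {1..x j div m}. coprime b (fact (N i)) \<and> n = b * m)"
proof -
  obtain b where b: "n = b * m" "1 \<le> b" and b_factors: "\<And>p. prime p \<Longrightarrow> p dvd b \<Longrightarrow> gpf m \<le> p"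
    using \<open>n \<in> Lset m\<close> unfolding Lset_def by auto
  have b_factors_gt: "N i < p" if "prime p" "p dvd b" for p
    using b_factors[OF that] gpf_B_gt[OF m] by linarith
  have "b \<noteq> 1"
    using b \<open>m \<noteq> n\<close> by auto
  then obtain p where p: "prime p" "p dvd b"
    using prime_factor_nat by blast
  have "p \<le> b"
    using p(2) b(2) by (simp add: dvd_imp_le)
  with b_factors_gt[OF p] K_le_N[of i] have "K < b"
    by linarith
  have "x i < K * m"
    using m by (simp add: B_def)
  also have "\<dots> \<le> n"
    using \<open>K < b\<close> b(1) by simp
  also have "\<dots> \<le> x j"
    using n by (simp add: B_def)
  finally have "x i < x j" .
  then have "i < j"
    using strict_mono_less[OF strict_mono_x] by blast
  moreover have "b \<le> x j div m"
    using n b(1) B_ge_2[OF m] by (auto simp: B_def less_eq_div_iff_mult_less_eq)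
  moreover have "coprime b (fact (N i))"
    using b_factors_gt by (rule coprime_fact_if_prime_divisors_gt)
  ultimately show ?thesis
    using b by (intro conjI bexI[of _ b]) auto
qed

lemma greaterThanAtMost_subset_A_Un_exceptional:
  "{x j div K<..x j} \<subseteq> (A \<inter> {1..x j}) \<union> {n \<in> {1..x j}. smooth (N j) n} \<union>
     (\<Union>i<j. \<Union>m\<in>B i. (\<lambda>b. b * m) ` {b \<in> {1..x j div m}. coprime b (fact (N i))})"
proof
  fix n assume n: "n \<in> {x j div K<..x j}"
  show "n \<in> (A \<inter> {1..x j}) \<union> {n \<in> {1..x j}. smooth (N j) n} \<union>
     (\<Union>i<j. \<Union>m\<in>B i. (\<lambda>b. b * m) ` {b \<in> {1..x j div m}. coprime b (fact (N i))})"
  proof (cases "smooth (N j) n")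
    case False
    then have "n \<in> B j"
      using n K_pos by (simp add: B_def div_less_iff_less_mult mult.commute)
    then have "n \<in> S" "1 \<le> n"
      using B_ge_2[of n j] unfolding S_def by auto
    show ?thesis
    proof (cases "n \<in> A")
      case False
      then obtain m i where "m \<in> B i" "m \<noteq> n" "n \<in> Lset m"
        using \<open>n \<in> S\<close> unfolding A_def S_def by blast
      then obtain b where "i < j" "b \<in> {1..x j div m}" "coprime b (fact (N i))" "n = b * m"
        using B_Lset_cofactor \<open>n \<in> B j\<close> by blast
      then have "n \<in> (\<lambda>b. b * m) ` {b \<in> {1..x j div m}. coprime b (fact (N i))}"
        by auto
      with \<open>i < j\<close> \<open>m \<in> B i\<close> show ?thesis
        by blast
    qed (use n \<open>1 \<le> n\<close> in auto)
  qed (use n in auto)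
qed

lemma card_cofactors_le:
  assumes "m \<in> B i"
  shows "real (card {b \<in> {1..x j div m}. coprime b (fact (N i))})
    \<le> (real K * x j / (real (x i) * fact (N i)) + 1) * totient (fact (N i) :: nat)"
proof -
  have "x i < K * m" "m \<noteq> 0"
    using assms B_ge_2[OF assms] by (auto simp: B_def)
  then have "real (x j) * x i \<le> real (x j) * (real K * m)"
    by (intro mult_left_mono) (simp_all flip: of_nat_mult)
  then have "real (x j) / m \<le> real K * x j / x i"
    using x_pos[of i] \<open>m \<noteq> 0\<close> by (simp add: field_simps)
  then have "real (x j div m) \<le> real K * x j / x i"
    by (rule order_trans[OF of_nat_div_le_of_nat])
  then have "real (x j div m) / fact (N i) + 1 \<le> real K * x j / (real (x i) * fact (N i)) + 1"
    by (simp add: divide_right_mono flip: divide_divide_eq_left)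
  then have "(real (x j div m) / fact (N i) + 1) * totient (fact (N i) :: nat)
      \<le> (real K * x j / (real (x i) * fact (N i)) + 1) * totient (fact (N i) :: nat)"
    by (rule mult_right_mono) simp
  moreover have "real (card {b \<in> {1..x j div m}. coprime b (fact (N i))})
      \<le> (real (x j div m) / fact (N i) + 1) * totient (fact (N i) :: nat)"
    using card_coprime_atLeastAtMost_le[of "fact (N i)" "x j div m"] by simp
  ultimately show ?thesis
    by linarith
qed

lemma sum_card_cofactors_le:
  assumes "i < j"
  shows "(\<Sum>m\<in>B i. real (card {b \<in> {1..x j div m}. coprime b (fact (N i))})) \<le> x j / K * (1/2) ^ i"
proof -
  define Q :: real where "Q = fact (N i)"
  define t where "t = real (totient (fact (N i) :: nat))"
  define \<beta> where "\<beta> = (real K * x j / (real (x i) * Q) + 1) * t"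
  have "0 < Q"
    by (simp add: Q_def)
  have "real (totient (fact (N i) :: nat)) \<le> real (fact (N i) :: nat)"
    by (rule of_nat_mono) (rule totient_le)
  then have "t \<le> Q"
    by (simp add: t_def Q_def)
  have "real (K * 2 ^ (i + 1) * x i * fact (N i)) \<le> real (x j)"
    by (rule of_nat_mono) (rule x_growth[OF assms])
  then have x_j_ge: "real K * 2 ^ (i + 1) * x i * Q \<le> x j"
    by (simp add: Q_def)
  have "(\<Sum>m\<in>B i. real (card {b \<in> {1..x j div m}. coprime b (fact (N i))})) \<le> card (B i) * \<beta>"
    unfolding \<beta>_def Q_def t_def using card_cofactors_le by (rule sum_bounded_above)
  also have "\<dots> \<le> x i * \<beta>"
    using card_B_le by (intro mult_right_mono) (simp_all add: \<beta>_def t_def Q_def)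
  also have "\<dots> = real K * x j * t / Q + x i * t"
    using x_pos[of i] \<open>0 < Q\<close> by (simp add: \<beta>_def field_simps)
  also have "\<dots> \<le> x j / (real K * 2 ^ (i + 1)) + x j / (real K * 2 ^ (i + 1))"
  proof (rule add_mono)
    have "real K * K * 2 ^ (i + 1) * t \<le> Q"
      using totient_fact_N_le[of i] unfolding t_def Q_def .
    from mult_left_mono[OF this, of "real (x j)"] show "real K * x j * t / Q \<le> x j / (real K * 2 ^ (i + 1))"
      using K_pos \<open>0 < Q\<close> by (simp add: field_simps)
    have "x i * t \<le> x i * Q"
      using \<open>t \<le> Q\<close> by (intro mult_left_mono) simp_all
    also have "\<dots> \<le> x j / (real K * 2 ^ (i + 1))"
      using x_j_ge K_pos by (simp add: pos_le_divide_eq mult_ac)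
    finally show "x i * t \<le> x j / (real K * 2 ^ (i + 1))" .
  qed
  also have "\<dots> = x j / K * (1/2) ^ i"
    using K_pos by (simp add: field_simps)
  finally show ?thesis .
qed

lemma card_cofactor_multiples_le:
  "real (card (\<Union>i<j. \<Union>m\<in>B i. (\<lambda>b. b * m) ` {b \<in> {1..x j div m}. coprime b (fact (N i))}))
    \<le> x j / K * 2"
proof -
  let ?C = "\<lambda>i m. {b \<in> {1..x j div m}. coprime b (fact (N i))}"
  have "card (\<Union>i<j. \<Union>m\<in>B i. (\<lambda>b. b * m) ` ?C i m) \<le> (\<Sum>i<j. card (\<Union>m\<in>B i. (\<lambda>b. b * m) ` ?C i m))"
    by (rule card_UN_le) simp
  also have "\<dots> \<le> (\<Sum>i<j. \<Sum>m\<in>B i. card (?C i m))"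
    by (intro sum_mono order_trans[OF card_UN_le[OF finite_B] sum_mono] card_image_le) simp
  finally have "real (card (\<Union>i<j. \<Union>m\<in>B i. (\<lambda>b. b * m) ` ?C i m)) \<le> real (\<Sum>i<j. \<Sum>m\<in>B i. card (?C i m))"
    by (rule of_nat_mono)
  also have "\<dots> = (\<Sum>i<j. \<Sum>m\<in>B i. real (card (?C i m)))"
    by simp
  also have "\<dots> \<le> (\<Sum>i<j. x j / K * (1/2) ^ i)"
    by (intro sum_mono sum_card_cofactors_le) simp
  also have "\<dots> = x j / K * (\<Sum>i<j. (1/2) ^ i)"
    by (simp add: sum_distrib_left)
  also have "\<dots> \<le> x j / K * 2"
    by (intro mult_left_mono) (simp_all add: sum_gp_strict)
  finally show ?thesis .
qed

lemma card_A_ge: "(1 - 4 / K) * x j \<le> card (A \<inter> {1..x j})"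
proof -
  let ?X = "real (x j)"
  let ?Smooth = "{n \<in> {1..x j}. smooth (N j) n}"
  let ?Bad = "\<Union>i<j. \<Union>m\<in>B i. (\<lambda>b. b * m) ` {b \<in> {1..x j div m}. coprime b (fact (N i))}"
  have "real (K * card ?Smooth) \<le> ?X"
    using card_smooth_x_le by (rule of_nat_mono)
  with K_pos have smooth: "real (card ?Smooth) \<le> ?X / K"
    by (simp add: field_simps)
  have "card {x j div K<..x j} \<le> card ((A \<inter> {1..x j}) \<union> ?Smooth \<union> ?Bad)"
    by (rule card_mono[OF _ greaterThanAtMost_subset_A_Un_exceptional]) (simp add: finite_B)
  also have "\<dots> \<le> card (A \<inter> {1..x j}) + card ?Smooth + card ?Bad"
    using card_Un_le[of "(A \<inter> {1..x j}) \<union> ?Smooth" ?Bad] card_Un_le[of "A \<inter> {1..x j}" ?Smooth]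
    by linarith
  finally have "real (card {x j div K<..x j}) \<le> real (card (A \<inter> {1..x j}) + card ?Smooth + card ?Bad)"
    by (rule of_nat_mono)
  moreover have "real (card {x j div K<..x j}) = ?X - real (x j div K)"
    by simp
  moreover have "real (x j div K) \<le> ?X / K"
    by (rule of_nat_div_le_of_nat)
  moreover have "(1 - 4 / K) * ?X = ?X - ?X / K - ?X / K - ?X / K * 2"
    by (simp add: field_simps)
  ultimately show ?thesis
    using smooth card_cofactor_multiples_le[of j] by simp
qed

lemma upper_density_A_ge: "ereal (1 - 4 / K) \<le> upper_density A"
  using strict_mono_x x_pos card_A_ge by (rule upper_density_ge_subseq)

end

lemma ex_totient_fact_le:
  fixes c :: real
  shows "\<exists>n \<ge> k. c * totient (fact n :: nat) \<le> fact n"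
proof -
  have "eventually (\<lambda>n. c \<le> harm n) sequentially"
    using harm_at_top by (simp add: filterlim_at_top)
  then obtain n where "k \<le> n" "c \<le> harm n"
    using eventually_happens'[OF _ eventually_conj[OF eventually_ge_at_top[of k]]] by auto
  have "c * totient (fact n :: nat) \<le> harm n * totient (fact n :: nat)"
    using \<open>c \<le> harm n\<close> by (rule mult_right_mono) simp
  also have "\<dots> \<le> fact n"
    by (rule harm_mult_totient_fact_le)
  finally show ?thesis
    using \<open>k \<le> n\<close> by blast
qed

lemma ex_L_primitive_construction:
  assumes "0 < K"
  shows "\<exists>N x. L_primitive_construction K N x"
proof -
  define N where "N i = (SOME n. K \<le> n \<and> real K * K * 2 ^ (i + 1) * totient (fact n :: nat) \<le> fact n)" for i
  have N: "K \<le> N i \<and> real K * K * 2 ^ (i + 1) * totient (fact (N i) :: nat) \<le> fact (N i)" for i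
    unfolding N_def by (rule someI_ex) (rule ex_totient_fact_le)
  define X where "X c j = (SOME X. c \<le> X \<and> K * card {n \<in> {1..X}. smooth (N j) n} \<le> X)" for c j
  have X: "c \<le> X c j \<and> K * card {n \<in> {1..X c j}. smooth (N j) n} \<le> X c j" for c j
    unfolding X_def by (rule someI_ex) (rule ex_card_smooth_le)
  define x where "x = rec_nat (X K 0) (\<lambda>j y. X (K * 2 ^ (j + 1) * y * fact (N j)) (Suc j))"
  have x_0: "x 0 = X K 0" and x_Suc: "x (Suc j) = X (K * 2 ^ (j + 1) * x j * fact (N j)) (Suc j)" for j
    by (simp_all add: x_def)
  have "K \<le> x j" for j
  proof (induction j)
    case (Suc j)
    then have "K * 1 * 1 * 1 \<le> K * 2 ^ (j + 1) * x j * fact (N j)"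
      using assms by (intro mult_le_mono) auto
    also have "\<dots> \<le> x (Suc j)"
      unfolding x_Suc using X by blast
    finally show ?case
      by simp
  qed (simp add: x_0 X)
  moreover have "K * card {n \<in> {1..x j}. smooth (N j) n} \<le> x j" for j
    by (cases j) (simp_all only: x_0 x_Suc X)
  ultimately have "L_primitive_construction K N x"
    using assms N X by unfold_locales (simp_all add: x_Suc)
  then show ?thesis
    by blast
qed

lemma ex_L_primitive_upper_density_ge:
  fixes K :: nat
  assumes "0 < K"
  shows "\<exists>A. L_primitive A \<and> ereal (1 - 4 / K) \<le> upper_density A"
  using ex_L_primitive_construction[OF assms] L_primitive_construction.L_primitive_A
    L_primitive_construction.upper_density_A_ge by blast

theorem proposition5p2:
  shows "(SUP A \<in> {A. L_primitive A}. upper_density A) = 1"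
proof (rule antisym)
  show "(SUP A \<in> {A. L_primitive A}. upper_density A) \<le> 1"
    by (rule SUP_least) (rule upper_density_le_1)
  show "1 \<le> (SUP A \<in> {A. L_primitive A}. upper_density A)"
  proof (rule ereal_le_epsilon2)
    fix e :: real assume "0 < e"
    obtain K :: nat where "4 / e < K"
      using reals_Archimedean2 by blast
    moreover have "0 < 4 / e"
      using \<open>0 < e\<close> by simp
    ultimately have "0 < K"
      by linarith
    with \<open>4 / e < K\<close> \<open>0 < e\<close> have "1 \<le> (1 - 4 / K) + e"
      by (simp add: field_simps)
    obtain A where "L_primitive A" "ereal (1 - 4 / K) \<le> upper_density A"
      using ex_L_primitive_upper_density_ge[OF \<open>0 < K\<close>] by blast
    then have "ereal (1 - 4 / K) \<le> (SUP A \<in> {A. L_primitive A}. upper_density A)"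
      by (meson SUP_upper mem_Collect_eq order_trans)
    then have "ereal (1 - 4 / K) + ereal e \<le> (SUP A \<in> {A. L_primitive A}. upper_density A) + ereal e"
      by (rule add_right_mono)
    moreover have "1 \<le> ereal (1 - 4 / K) + ereal e"
      using \<open>1 \<le> (1 - 4 / K) + e\<close> by simp
    ultimately show "1 \<le> (SUP A \<in> {A. L_primitive A}. upper_density A) + ereal e"
      by (rule order_trans[rotated])
  qed
qed

end
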